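(* Let $\mathcal{A}\subseteq\mathbb{R}^a$ be a closed convex set with recession cone $\mathcal{A}_\infty$. Consider the following properties. (S1) There is $a^0\in\mathbb{R}^a$ with $\mathcal{A}\subseteq\{a^0\}+\mathcal{A}_\infty$. (S2) There are $k\in\mathbb{N}$ and $a^1,\dots,a^k\in\mathbb{R}^a$ with $\mathcal{A}\subseteq\operatorname{conv}\{a^1,\dots,a^k\}+\mathcal{A}_\infty$. (S3) $\sup_{x\in\mathcal{A}}\inf_{y\in\mathcal{A}_\infty}\|x-y\|_1<\infty$. Then (S1) implies (S2), and (S2) is equivalent to (S3). If in addition $\mathcal{A}_\infty$ has nonempty interior, then (S1), (S2) and (S3) are all equivalent.
   Context: The recession cone of a set $X\subseteq\mathbb{R}^n$ is $X_\infty=\{d\in\mathbb{R}^n: x+\lambda d\in X \text{ for all } x\in X,\ \lambda\ge 0\}$. $\|\cdot\|_1$ denotes the $\ell_1$ norm. *)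

theory Defs
  imports "HOL-Analysis.Analysis"
begin

definition recession_cone :: "(real ^ 'n) set \<Rightarrow> (real ^ 'n) set" where
  "recession_cone X = {d. \<forall>x\<in>X. \<forall>t::real. t \<ge> 0 \<longrightarrow> x + t *\<^sub>R d \<in> X}"

definition norm1 :: "real ^ 'n \<Rightarrow> real" where
  "norm1 x = (\<Sum>i\<in>UNIV. \<bar>x $ i\<bar>)"

definition msum :: "(real ^ 'n) set \<Rightarrow> (real ^ 'n) set \<Rightarrow> (real ^ 'n) set" where
  "msum P Q = {p + q | p q. p \<in> P \<and> q \<in> Q}"

definition S1 :: "(real ^ 'n) set \<Rightarrow> bool" where
  "S1 A \<longleftrightarrow> (\<exists>a0. A \<subseteq> msum {a0} (recession_cone A))"

definition S2 :: "(real ^ 'n) set \<Rightarrow> bool" where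
  "S2 A \<longleftrightarrow> (\<exists>P. finite P \<and> A \<subseteq> msum (convex hull P) (recession_cone A))"

definition S3 :: "(real ^ 'n) set \<Rightarrow> bool" where
  "S3 A \<longleftrightarrow> bdd_above ((\<lambda>x. INF y\<in>recession_cone A. norm1 (x - y)) ` A)"

end

theory Submission
  imports Defs
begin

text \<open>All three properties say that A lies in a bounded set plus its recession cone: for (S2)
  because convex hulls of finite sets are exactly what is needed to cover bounded sets, and for
  (S3) because the bounded set can be taken to be an l1-ball of radius above the supremum.
  If the cone contains a ball around d, then a bounded offset c can be absorbed into the cone
  after shifting by a large multiple of d: c + t d lies in the cone for all c in the bounded set,
  so A lies in the single translate -t d plus the cone.\<close>

lemma zero_in_recession_cone: "0 \<in> recession_cone A"
  unfolding recession_cone_def by simp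

lemma recession_cone_add:
  assumes "d1 \<in> recession_cone A" "d2 \<in> recession_cone A"
  shows "d1 + d2 \<in> recession_cone A"
  unfolding recession_cone_def
proof (intro CollectI ballI allI impI)
  fix x and t :: real assume "x \<in> A" "t \<ge> 0"
  then have "(x + t *\<^sub>R d1) + t *\<^sub>R d2 \<in> A"
    using assms unfolding recession_cone_def by blast
  then show "x + t *\<^sub>R (d1 + d2) \<in> A" by (simp add: algebra_simps)
qed

lemma recession_cone_scaleR:
  assumes "d \<in> recession_cone A" "s \<ge> 0"
  shows "s *\<^sub>R d \<in> recession_cone A"
  using assms unfolding recession_cone_def by (simp add: mult_nonneg_nonneg)

lemma norm1_nonneg: "norm1 x \<ge> 0"
  unfolding norm1_def by (simp add: sum_nonneg)

lemma norm_le_norm1: "norm x \<le> norm1 x"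
  unfolding norm1_def by (rule norm_le_l1_cart)

lemma norm1_le_card_norm: "norm1 (x :: real ^ 'n) \<le> real CARD('n) * norm x"
proof -
  have "norm1 x \<le> (\<Sum>i\<in>(UNIV :: 'n set). norm x)"
    unfolding norm1_def by (rule sum_mono) (rule component_le_norm_cart)
  then show ?thesis by simp
qed

lemma bounded_subset_convex_hull_finite:
  fixes S :: "'a::euclidean_space set"
  assumes "bounded S"
  obtains P where "finite P" "S \<subseteq> convex hull P"
proof -
  obtain a where "S \<subseteq> cbox (- a) a"
    using bounded_subset_cbox_symmetric[OF assms] by blast
  moreover obtain P where "finite P" "cbox (- a) a = convex hull P"
    using closed_interval_as_convex_hull by blast
  ultimately show thesis using that by simp
qed

lemma msum_mono_left: "K \<subseteq> L \<Longrightarrow> msum K C \<subseteq> msum L C"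
  unfolding msum_def by blast

lemma S2_iff_bounded_offset:
  "S2 A \<longleftrightarrow> (\<exists>K. bounded K \<and> A \<subseteq> msum K (recession_cone A))"
proof
  assume "S2 A"
  then obtain P where "finite P" "A \<subseteq> msum (convex hull P) (recession_cone A)"
    unfolding S2_def by blast
  then show "\<exists>K. bounded K \<and> A \<subseteq> msum K (recession_cone A)"
    using finite_imp_bounded_convex_hull by blast
next
  assume "\<exists>K. bounded K \<and> A \<subseteq> msum K (recession_cone A)"
  then obtain K where "bounded K" "A \<subseteq> msum K (recession_cone A)" by blast
  moreover obtain P where "finite P" "K \<subseteq> convex hull P"
    using bounded_subset_convex_hull_finite[OF \<open>bounded K\<close>] by blast
  ultimately show "S2 A"
    unfolding S2_def using msum_mono_left by blast
qed

lemma INF_norm1_less_iff: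
  assumes "C \<noteq> {}"
  shows "(INF y\<in>C. norm1 (x - y)) < R \<longleftrightarrow> (\<exists>y\<in>C. norm1 (x - y) < R)"
  by (rule cINF_less_iff[OF assms]) (auto intro: bdd_belowI2[where m = 0] simp: norm1_nonneg)

lemma INF_norm1_le: "y \<in> C \<Longrightarrow> (INF z\<in>C. norm1 (x - z)) \<le> norm1 (x - y)"
  by (rule cINF_lower) (auto intro: bdd_belowI2[where m = 0] simp: norm1_nonneg)

lemma S3_iff_bounded_offset:
  fixes A :: "(real ^ 'n) set"
  shows "S3 A \<longleftrightarrow> (\<exists>K. bounded K \<and> A \<subseteq> msum K (recession_cone A))"
proof
  assume "S3 A"
  then obtain M where M: "\<And>x. x \<in> A \<Longrightarrow> (INF y\<in>recession_cone A. norm1 (x - y)) \<le> M"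
    unfolding S3_def bdd_above_def by blast
  let ?K = "{v. norm1 v < M + 1}"
  have "bounded ?K"
    by (rule boundedI[where B = "M + 1"]) (use norm_le_norm1 in \<open>fastforce intro: less_imp_le order_trans\<close>)
  moreover have "A \<subseteq> msum ?K (recession_cone A)"
  proof
    fix x assume "x \<in> A"
    then have "(INF y\<in>recession_cone A. norm1 (x - y)) < M + 1"
      using M by fastforce
    then obtain y where "y \<in> recession_cone A" "norm1 (x - y) < M + 1"
      using INF_norm1_less_iff zero_in_recession_cone by blast
    then show "x \<in> msum ?K (recession_cone A)"
      unfolding msum_def by (intro CollectI exI[of _ "x - y"] exI[of _ y]) simp
  qed
  ultimately show "\<exists>K. bounded K \<and> A \<subseteq> msum K (recession_cone A)" by blast
next
  assume "\<exists>K. bounded K \<and> A \<subseteq> msum K (recession_cone A)"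
  then obtain K B where K: "A \<subseteq> msum K (recession_cone A)" and B: "\<And>c. c \<in> K \<Longrightarrow> norm c \<le> B"
    by (meson bounded_iff)
  show "S3 A"
    unfolding S3_def
  proof (rule bdd_aboveI2)
    fix x assume "x \<in> A"
    then obtain c d where "c \<in> K" "d \<in> recession_cone A" "x = c + d"
      using K unfolding msum_def by blast
    then have "(INF y\<in>recession_cone A. norm1 (x - y)) \<le> norm1 c"
      using INF_norm1_le[of d "recession_cone A" x] by simp
    also have "\<dots> \<le> real CARD('n) * B"
      using norm1_le_card_norm[of c] B[OF \<open>c \<in> K\<close>]
      by (meson mult_left_mono of_nat_0_le_iff order_trans)
    finally show "(INF y\<in>recession_cone A. norm1 (x - y)) \<le> real CARD('n) * B" .
  qed
qed

lemma bounded_offset_absorbed_by_interior: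
  assumes "d \<in> interior (recession_cone A)" "bounded K"
  obtains t where "\<And>c. c \<in> K \<Longrightarrow> c + t *\<^sub>R d \<in> recession_cone A"
proof -
  obtain r where r: "r > 0" "ball d r \<subseteq> recession_cone A"
    using assms(1) mem_interior by blast
  obtain B where B: "B > 0" "\<And>c. c \<in> K \<Longrightarrow> norm c \<le> B"
    using assms(2) bounded_pos by blast
  define t where "t = 2 * B / r"
  have "t > 0" unfolding t_def using B r by simp
  have "c + t *\<^sub>R d \<in> recession_cone A" if "c \<in> K" for c
  proof -
    have "norm ((1 / t) *\<^sub>R c) \<le> B / t"
      using B(2)[OF that] \<open>t > 0\<close> by (simp add: divide_right_mono)
    also have "\<dots> < r" unfolding t_def using B r by (simp add: field_simps)
    finally have "d + (1 / t) *\<^sub>R c \<in> recession_cone A"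
      using r(2) by (auto simp: dist_norm)
    then have "t *\<^sub>R (d + (1 / t) *\<^sub>R c) \<in> recession_cone A"
      using \<open>t > 0\<close> by (simp add: recession_cone_scaleR)
    then show ?thesis
      using \<open>t > 0\<close> by (simp add: algebra_simps)
  qed
  then show thesis by (rule that)
qed

lemma S1_if_bounded_offset:
  assumes "interior (recession_cone A) \<noteq> {}" "bounded K" "A \<subseteq> msum K (recession_cone A)"
  shows "S1 A"
proof -
  obtain d where "d \<in> interior (recession_cone A)" using assms(1) by blast
  then obtain t where absorb: "\<And>c. c \<in> K \<Longrightarrow> c + t *\<^sub>R d \<in> recession_cone A"
    using bounded_offset_absorbed_by_interior assms(2) by blast
  have "A \<subseteq> msum {- t *\<^sub>R d} (recession_cone A)"
  proof
    fix x assume "x \<in> A"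
    then obtain c y where "c \<in> K" "y \<in> recession_cone A" "x = c + y"
      using assms(3) unfolding msum_def by blast
    then have "(c + t *\<^sub>R d) + y \<in> recession_cone A" "x = - t *\<^sub>R d + ((c + t *\<^sub>R d) + y)"
      using absorb recession_cone_add by auto
    then show "x \<in> msum {- t *\<^sub>R d} (recession_cone A)"
      unfolding msum_def by blast
  qed
  then show ?thesis unfolding S1_def by blast
qed

lemma S1_imp_S2: "S1 A \<Longrightarrow> S2 A"
  unfolding S1_def S2_def by (metis convex_hull_singleton finite.emptyI finite.insertI)

theorem mainTheorem2:
  fixes A :: "(real ^ 'n) set"
  assumes "closed A" and "convex A"
  shows "(S1 A \<longrightarrow> S2 A) \<and> (S2 A \<longleftrightarrow> S3 A) \<and>
         (interior (recession_cone A) \<noteq> {} \<longrightarrow> (S1 A \<longleftrightarrow> S2 A) \<and> (S2 A \<longleftrightarrow> S3 A))"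
proof -
  have S2_iff_S3: "S2 A \<longleftrightarrow> S3 A"
    using S2_iff_bounded_offset S3_iff_bounded_offset by blast
  have "S2 A \<Longrightarrow> S1 A" if "interior (recession_cone A) \<noteq> {}"
    using that S2_iff_bounded_offset S1_if_bounded_offset by blast
  then show ?thesis
    using S1_imp_S2 S2_iff_S3 by blast
qed

end
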